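(* Let $(X,I,T)$ be a relative monad and $(S,S_0)$ a monad compatible with $I$ in a 2-category $\mathcal{K}$, and let $d\colon ST\Rightarrow TS_0$ be a relative distributive law of $T$ over $(S,S_0)$. Then setting, for every $K$-indexed $S_0$-algebra $(M,\mu)$, $\hat T(M,\mu)=(TM,\;T\mu\cdot dM)$ and, for every morphism $f$ of $K$-indexed $S_0$-algebras, $\hat T(f)=Tf$, defines a lifting $\hat T$ of $T$ to the algebras of $(S,S_0)$.
   Context: Conventions: 1-cells compose by juxtaposition; vertical composition of 2-cells is written $\cdot$; whiskering by juxtaposition. Relative monad: a relative monad $(X,I,T)$ in $\mathcal{K}$ consists of objects $X_0,X$, 1-cells $I,T\colon X_0\to X$, an operator $(-)^\dagger\colon[I,T]\to[T,T]$ (extension: for every span $A,B\colon O\to X_0$ a function sending 2-cells $IA\Rightarrow TB$ to 2-cells $TA\Rightarrow TB$, natural in $O$, $A$ and $B$) and a 2-cell $t\colon I\Rightarrow T$ such that $k^\dagger\cdot tA=k$, $(tA)^\dagger=1_{TA}$, $(l^\dagger\cdot k)^\dagger=l^\dagger\cdot k^\dagger$ for all $k\colon IA\Rightarrow TB$, $l\colon IB\Rightarrow TC$. Monad compatible with $I\colon X_0\to X$: a pair $(S,S_0)$ of monads $(X,S,m,s)$ and $(X_0,S_0,m_0,s_0)$ in $\mathcal{K}$ with $SI=IS_0$, $mI=Im_0$, $sI=Is_0$. Relative distributive law: a 2-cell $d\colon ST\Rightarrow TS_0$ such that (D1) $d\cdot mT=Tm_0\cdot dS_0\cdot Sd$;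 (D2) $d\cdot sT=Ts_0$; (D3) for all $A,B\colon O\to X_0$ and $f\colon IA\Rightarrow TB$, $dB\cdot S(f^\dagger)=(dB\cdot Sf)^\dagger\cdot dA$ (here $dB\cdot Sf\colon IS_0A=SIA\Rightarrow TS_0B$); (D4) $d\cdot St=tS_0$ as 2-cells $SI=IS_0\Rightarrow TS_0$. Indexed algebras: for a monad $(X,S,m,s)$ and object $K$, $S\text{-}\mathrm{Alg}(K)$ is the category whose objects are pairs $(M,\mu)$ with $M\colon K\to X$, $\mu\colon SM\Rightarrow M$, $\mu\cdot sM=1_M$, $\mu\cdot S\mu=\mu\cdot mM$, and whose morphisms $(M,\mu)\to(N,\nu)$ are 2-cells $f\colon M\Rightarrow N$ with $f\cdot\mu=\nu\cdot Sf$; this gives a 2-functor $S\text{-}\mathrm{Alg}(-)\colon\mathcal{K}^{op}\to\mathbf{Cat}$ by precomposition. Lifting to algebras: a lifting of $T$ to the algebras of $(S,S_0)$ is a 2-natural transformation $\hat T\colon S_0\text{-}\mathrm{Alg}(-)\to S\text{-}\mathrm{Alg}(-)$ of the form $\hat T(M,\mu)=(TM,\hat T\mu)$ on objects and $\hat T(f)=Tf$ on morphisms, carrying the relative monad structure over $I_*\colon(M,\mu)\mapsto(IM,I\mu)$ whose unit and extension are those of $T$, which means precisely: (a) for all $K$-indexed $S_0$-algebras $(M,\mu),(N,\nu)$ and every 2-cell $f\colon IM\Rightarrow TN$ with $f\cdot I\mu=\hat T\nu\cdot Sf$, one has $f^\dagger\cdot\hat T\mu=\hat T\nu\cdot Sf^\dagger$;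 (b) for every $(M,\mu)$, $tM\cdot I\mu=\hat T\mu\cdot StM$. *)

theory Defs
  imports Main
begin

text \<open>Composition of 1-cells is written by juxtaposition in the paper:
c1 G F is the composite GF (first F, then G).  vc b a is the vertical composite
b . a (first a, then b); hc b a is the horizontal composite ba, where a is the 2-cell
between the inner (right-hand) 1-cells and b the one between the outer 1-cells.\<close>

record ('o,'a,'c) twocat =
  dom1 :: "'a \<Rightarrow> 'o"
  cod1 :: "'a \<Rightarrow> 'o"
  id1  :: "'o \<Rightarrow> 'a"
  c1   :: "'a \<Rightarrow> 'a \<Rightarrow> 'a"
  s2   :: "'c \<Rightarrow> 'a"
  t2   :: "'c \<Rightarrow> 'a"
  id2  :: "'a \<Rightarrow> 'c"
  vc   :: "'c \<Rightarrow> 'c \<Rightarrow> 'c"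
  hc   :: "'c \<Rightarrow> 'c \<Rightarrow> 'c"

definition hom1 :: "('o,'a,'c) twocat \<Rightarrow> 'a \<Rightarrow> 'o \<Rightarrow> 'o \<Rightarrow> bool" where
  "hom1 C F x y \<longleftrightarrow> dom1 C F = x \<and> cod1 C F = y"

definition hom2 :: "('o,'a,'c) twocat \<Rightarrow> 'c \<Rightarrow> 'a \<Rightarrow> 'a \<Rightarrow> bool" where
  "hom2 C \<alpha> F G \<longleftrightarrow> s2 C \<alpha> = F \<and> t2 C \<alpha> = G"

definition wl :: "('o,'a,'c) twocat \<Rightarrow> 'a \<Rightarrow> 'c \<Rightarrow> 'c" where
  "wl C F \<alpha> = hc C (id2 C F) \<alpha>"

definition wr :: "('o,'a,'c) twocat \<Rightarrow> 'c \<Rightarrow> 'a \<Rightarrow> 'c" where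
  "wr C \<alpha> F = hc C \<alpha> (id2 C F)"

definition strict_2cat :: "('o,'a,'c) twocat \<Rightarrow> bool" where
  "strict_2cat C \<longleftrightarrow>
    \<comment> \<open>underlying category of objects and 1-cells\<close>
    (\<forall>x. dom1 C (id1 C x) = x \<and> cod1 C (id1 C x) = x) \<and>
    (\<forall>F G. cod1 C F = dom1 C G \<longrightarrow>
        dom1 C (c1 C G F) = dom1 C F \<and> cod1 C (c1 C G F) = cod1 C G) \<and>
    (\<forall>F. c1 C F (id1 C (dom1 C F)) = F \<and> c1 C (id1 C (cod1 C F)) F = F) \<and>
    (\<forall>F G H. cod1 C F = dom1 C G \<and> cod1 C G = dom1 C H \<longrightarrow>
        c1 C H (c1 C G F) = c1 C (c1 C H G) F) \<and>
    \<comment> \<open>2-cells go between parallel 1-cells\<close>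
    (\<forall>a. dom1 C (s2 C a) = dom1 C (t2 C a) \<and> cod1 C (s2 C a) = cod1 C (t2 C a)) \<and>
    \<comment> \<open>vertical composition: hom-categories\<close>
    (\<forall>F. s2 C (id2 C F) = F \<and> t2 C (id2 C F) = F) \<and>
    (\<forall>a b. t2 C a = s2 C b \<longrightarrow> s2 C (vc C b a) = s2 C a \<and> t2 C (vc C b a) = t2 C b) \<and>
    (\<forall>a. vc C a (id2 C (s2 C a)) = a \<and> vc C (id2 C (t2 C a)) a = a) \<and>
    (\<forall>a b c. t2 C a = s2 C b \<and> t2 C b = s2 C c \<longrightarrow>
        vc C c (vc C b a) = vc C (vc C c b) a) \<and>
    \<comment> \<open>horizontal composition\<close>
    (\<forall>a b. cod1 C (s2 C a) = dom1 C (s2 C b) \<longrightarrow>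
        s2 C (hc C b a) = c1 C (s2 C b) (s2 C a) \<and> t2 C (hc C b a) = c1 C (t2 C b) (t2 C a)) \<and>
    (\<forall>F G. cod1 C F = dom1 C G \<longrightarrow> hc C (id2 C G) (id2 C F) = id2 C (c1 C G F)) \<and>
    (\<forall>a. hc C (id2 C (id1 C (cod1 C (s2 C a)))) a = a \<and>
         hc C a (id2 C (id1 C (dom1 C (s2 C a)))) = a) \<and>
    (\<forall>a b c. cod1 C (s2 C a) = dom1 C (s2 C b) \<and> cod1 C (s2 C b) = dom1 C (s2 C c) \<longrightarrow>
        hc C c (hc C b a) = hc C (hc C c b) a) \<and>
    \<comment> \<open>interchange law\<close>
    (\<forall>a a' b b'. t2 C a = s2 C a' \<and> t2 C b = s2 C b' \<and> cod1 C (s2 C a) = dom1 C (s2 C b) \<longrightarrow>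
        hc C (vc C b' b) (vc C a' a) = vc C (hc C b' a') (hc C b a))"

text \<open>The extension operator is a family ext A B indexed by the span A, B : O \<rightarrow> X0,
sending 2-cells IA \<Rightarrow> TB to 2-cells TA \<Rightarrow> TB; it is natural in O (compatible with
precomposition by H : O' \<rightarrow> O), in A and in B.\<close>

definition span0 :: "('o,'a,'c) twocat \<Rightarrow> 'o \<Rightarrow> 'a \<Rightarrow> 'a \<Rightarrow> bool" where
  "span0 C X0 A B \<longleftrightarrow> cod1 C A = X0 \<and> cod1 C B = X0 \<and> dom1 C A = dom1 C B"

definition rel_monad ::
  "('o,'a,'c) twocat \<Rightarrow> 'o \<Rightarrow> 'o \<Rightarrow> 'a \<Rightarrow> 'a \<Rightarrow> ('a \<Rightarrow> 'a \<Rightarrow> 'c \<Rightarrow> 'c) \<Rightarrow> 'c \<Rightarrow> bool" where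
  "rel_monad C X0 X I T ext t \<longleftrightarrow>
    hom1 C I X0 X \<and> hom1 C T X0 X \<and> hom2 C t I T \<and>
    \<comment> \<open>typing of the extension operator\<close>
    (\<forall>A B k. span0 C X0 A B \<and> hom2 C k (c1 C I A) (c1 C T B) \<longrightarrow>
        hom2 C (ext A B k) (c1 C T A) (c1 C T B)) \<and>
    \<comment> \<open>naturality in O\<close>
    (\<forall>A B k H. span0 C X0 A B \<and> hom2 C k (c1 C I A) (c1 C T B) \<and> cod1 C H = dom1 C A \<longrightarrow>
        ext (c1 C A H) (c1 C B H) (wr C k H) = wr C (ext A B k) H) \<and>
    \<comment> \<open>naturality in A\<close>
    (\<forall>A A' B k a. span0 C X0 A B \<and> span0 C X0 A' B \<and> hom2 C k (c1 C I A) (c1 C T B) \<and>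
        hom2 C a A' A \<longrightarrow>
        ext A' B (vc C k (wl C I a)) = vc C (ext A B k) (wl C T a)) \<and>
    \<comment> \<open>naturality in B\<close>
    (\<forall>A B B' k b. span0 C X0 A B \<and> span0 C X0 A B' \<and> hom2 C k (c1 C I A) (c1 C T B) \<and>
        hom2 C b B B' \<longrightarrow>
        ext A B' (vc C (wl C T b) k) = vc C (wl C T b) (ext A B k)) \<and>
    \<comment> \<open>relative monad laws\<close>
    (\<forall>A B k. span0 C X0 A B \<and> hom2 C k (c1 C I A) (c1 C T B) \<longrightarrow>
        vc C (ext A B k) (wr C t A) = k) \<and>
    (\<forall>A. cod1 C A = X0 \<longrightarrow> ext A A (wr C t A) = id2 C (c1 C T A)) \<and>
    (\<forall>A B D k l. span0 C X0 A B \<and> span0 C X0 B D \<and>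
        hom2 C k (c1 C I A) (c1 C T B) \<and> hom2 C l (c1 C I B) (c1 C T D) \<longrightarrow>
        ext A D (vc C (ext B D l) k) = vc C (ext B D l) (ext A B k))"

definition monad2 :: "('o,'a,'c) twocat \<Rightarrow> 'o \<Rightarrow> 'a \<Rightarrow> 'c \<Rightarrow> 'c \<Rightarrow> bool" where
  "monad2 C X S m s \<longleftrightarrow>
    hom1 C S X X \<and> hom2 C m (c1 C S S) S \<and> hom2 C s (id1 C X) S \<and>
    vc C m (wr C m S) = vc C m (wl C S m) \<and>
    vc C m (wr C s S) = id2 C S \<and>
    vc C m (wl C S s) = id2 C S"

definition compatible_monad ::
  "('o,'a,'c) twocat \<Rightarrow> 'o \<Rightarrow> 'o \<Rightarrow> 'a \<Rightarrow> 'a \<Rightarrow> 'c \<Rightarrow> 'c \<Rightarrow> 'a \<Rightarrow> 'c \<Rightarrow> 'c \<Rightarrow> bool" where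
  "compatible_monad C X0 X I S m s S0 m0 s0 \<longleftrightarrow>
    monad2 C X S m s \<and> monad2 C X0 S0 m0 s0 \<and>
    c1 C S I = c1 C I S0 \<and> wr C m I = wl C I m0 \<and> wr C s I = wl C I s0"

definition rel_distr_law ::
  "('o,'a,'c) twocat \<Rightarrow> 'o \<Rightarrow> 'a \<Rightarrow> 'a \<Rightarrow> ('a \<Rightarrow> 'a \<Rightarrow> 'c \<Rightarrow> 'c) \<Rightarrow> 'c \<Rightarrow>
   'a \<Rightarrow> 'c \<Rightarrow> 'c \<Rightarrow> 'a \<Rightarrow> 'c \<Rightarrow> 'c \<Rightarrow> 'c \<Rightarrow> bool" where
  "rel_distr_law C X0 I T ext t S m s S0 m0 s0 d \<longleftrightarrow>
    hom2 C d (c1 C S T) (c1 C T S0) \<and>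
    \<comment> \<open>(D1)\<close>
    vc C d (wr C m T) = vc C (wl C T m0) (vc C (wr C d S0) (wl C S d)) \<and>
    \<comment> \<open>(D2)\<close>
    vc C d (wr C s T) = wl C T s0 \<and>
    \<comment> \<open>(D3)\<close>
    (\<forall>A B f. span0 C X0 A B \<and> hom2 C f (c1 C I A) (c1 C T B) \<longrightarrow>
       vc C (wr C d B) (wl C S (ext A B f)) =
       vc C (ext (c1 C S0 A) (c1 C S0 B) (vc C (wr C d B) (wl C S f))) (wr C d A)) \<and>
    \<comment> \<open>(D4)\<close>
    vc C d (wl C S t) = wr C t S0"

definition alg :: "('o,'a,'c) twocat \<Rightarrow> 'o \<Rightarrow> 'a \<Rightarrow> 'c \<Rightarrow> 'c \<Rightarrow> 'o \<Rightarrow> 'a \<Rightarrow> 'c \<Rightarrow> bool" where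
  "alg C X S m s K M \<mu> \<longleftrightarrow>
    hom1 C M K X \<and> hom2 C \<mu> (c1 C S M) M \<and>
    vc C \<mu> (wr C s M) = id2 C M \<and>
    vc C \<mu> (wl C S \<mu>) = vc C \<mu> (wr C m M)"

definition alg_mor :: "('o,'a,'c) twocat \<Rightarrow> 'a \<Rightarrow> 'a \<Rightarrow> 'c \<Rightarrow> 'a \<Rightarrow> 'c \<Rightarrow> 'c \<Rightarrow> bool" where
  "alg_mor C S M \<mu> N \<nu> f \<longleftrightarrow> hom2 C f M N \<and> vc C f \<mu> = vc C \<nu> (wl C S f)"

text \<open>A candidate lifting is given by its action on structure maps: Th M mu is the
S-algebra structure on TM assigned to the S0-algebra (M, mu); on morphisms it acts by
f \<mapsto> Tf.  lifting states that this is a 2-natural transformation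
S0-Alg(-) \<rightarrow> S-Alg(-) (well defined on objects and morphisms, functorial, natural
w.r.t. precomposition with 1-cells H : K' \<rightarrow> K and 2-cells between them), carrying the
relative monad structure of T over I_* (conditions (a) and (b)).\<close>

definition lifting ::
  "('o,'a,'c) twocat \<Rightarrow> 'o \<Rightarrow> 'o \<Rightarrow> 'a \<Rightarrow> 'a \<Rightarrow> ('a \<Rightarrow> 'a \<Rightarrow> 'c \<Rightarrow> 'c) \<Rightarrow> 'c \<Rightarrow>
   'a \<Rightarrow> 'c \<Rightarrow> 'c \<Rightarrow> 'a \<Rightarrow> 'c \<Rightarrow> 'c \<Rightarrow> ('a \<Rightarrow> 'c \<Rightarrow> 'c) \<Rightarrow> bool" where
  "lifting C X0 X I T ext t S m s S0 m0 s0 Th \<longleftrightarrow>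
    \<comment> \<open>objects are sent to S-algebras\<close>
    (\<forall>K M \<mu>. alg C X0 S0 m0 s0 K M \<mu> \<longrightarrow> alg C X S m s K (c1 C T M) (Th M \<mu>)) \<and>
    \<comment> \<open>morphisms are sent to morphisms\<close>
    (\<forall>K M \<mu> N \<nu> f. alg C X0 S0 m0 s0 K M \<mu> \<and> alg C X0 S0 m0 s0 K N \<nu> \<and>
        alg_mor C S0 M \<mu> N \<nu> f \<longrightarrow>
        alg_mor C S (c1 C T M) (Th M \<mu>) (c1 C T N) (Th N \<nu>) (wl C T f)) \<and>
    \<comment> \<open>functoriality\<close>
    (\<forall>K M \<mu>. alg C X0 S0 m0 s0 K M \<mu> \<longrightarrow> wl C T (id2 C M) = id2 C (c1 C T M)) \<and>
    (\<forall>K M \<mu> N \<nu> P \<rho> f g. alg C X0 S0 m0 s0 K M \<mu> \<and> alg C X0 S0 m0 s0 K N \<nu> \<and>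
        alg C X0 S0 m0 s0 K P \<rho> \<and>
        alg_mor C S0 M \<mu> N \<nu> f \<and> alg_mor C S0 N \<nu> P \<rho> g \<longrightarrow>
        wl C T (vc C g f) = vc C (wl C T g) (wl C T f)) \<and>
    \<comment> \<open>naturality with respect to 1-cells H : K' \<rightarrow> K\<close>
    (\<forall>K K' M \<mu> H. alg C X0 S0 m0 s0 K M \<mu> \<and> hom1 C H K' K \<longrightarrow>
        c1 C T (c1 C M H) = c1 C (c1 C T M) H \<and>
        Th (c1 C M H) (wr C \<mu> H) = wr C (Th M \<mu>) H) \<and>
    (\<forall>K K' M \<mu> N \<nu> f H. alg C X0 S0 m0 s0 K M \<mu> \<and> alg C X0 S0 m0 s0 K N \<nu> \<and>
        alg_mor C S0 M \<mu> N \<nu> f \<and> hom1 C H K' K \<longrightarrow>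
        wl C T (wr C f H) = wr C (wl C T f) H) \<and>
    \<comment> \<open>naturality with respect to 2-cells sigma : H \<Rightarrow> H' between H, H' : K' \<rightarrow> K\<close>
    (\<forall>K K' M \<mu> H H' \<sigma>. alg C X0 S0 m0 s0 K M \<mu> \<and> hom1 C H K' K \<and> hom1 C H' K' K \<and>
        hom2 C \<sigma> H H' \<longrightarrow>
        wl C T (wl C M \<sigma>) = wl C (c1 C T M) \<sigma>) \<and>
    \<comment> \<open>(a): extension is carried over\<close>
    (\<forall>K M \<mu> N \<nu> f. alg C X0 S0 m0 s0 K M \<mu> \<and> alg C X0 S0 m0 s0 K N \<nu> \<and>
        hom2 C f (c1 C I M) (c1 C T N) \<and>
        vc C f (wl C I \<mu>) = vc C (Th N \<nu>) (wl C S f) \<longrightarrow>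
        vc C (ext M N f) (Th M \<mu>) = vc C (Th N \<nu>) (wl C S (ext M N f))) \<and>
    \<comment> \<open>(b): the unit is carried over\<close>
    (\<forall>K M \<mu>. alg C X0 S0 m0 s0 K M \<mu> \<longrightarrow>
        vc C (wr C t M) (wl C I \<mu>) = vc C (Th M \<mu>) (wl C S (wr C t M)))"

end

theory Submission imports Defs begin

text \<open>Each required law is a
diagram chase: the algebra laws use (D1), (D2) and the algebra laws of \<open>\<mu>\<close>; preservation of
morphisms and of the unit use the interchange law together with (D4); preservation of
extension uses (D3) and the naturality of \<open>(-)\<^sup>\<dagger>\<close> in both arguments. The 2-naturality
conditions are plain whiskering identities.\<close>

locale strict_two_cat =
  fixes C :: "('o,'a,'c) twocat"
  assumes strict: "strict_2cat C"
begin

lemma dom_id1 [simp]: "dom1 C (id1 C x) = x"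
  and cod_id1 [simp]: "cod1 C (id1 C x) = x"
  using strict unfolding strict_2cat_def by auto

lemma dom_c1 [simp]: "cod1 C F = dom1 C G \<Longrightarrow> dom1 C (c1 C G F) = dom1 C F"
  and cod_c1 [simp]: "cod1 C F = dom1 C G \<Longrightarrow> cod1 C (c1 C G F) = cod1 C G"
  using strict unfolding strict_2cat_def by auto

lemma c1_assoc [simp]:
  "cod1 C F = dom1 C G \<Longrightarrow> cod1 C G = dom1 C H \<Longrightarrow> c1 C (c1 C H G) F = c1 C H (c1 C G F)"
  using strict unfolding strict_2cat_def by metis

lemma dom_t2 [simp]: "dom1 C (t2 C a) = dom1 C (s2 C a)"
  and cod_t2 [simp]: "cod1 C (t2 C a) = cod1 C (s2 C a)"
  using strict unfolding strict_2cat_def by metis+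

lemma s2_id2 [simp]: "s2 C (id2 C F) = F"
  and t2_id2 [simp]: "t2 C (id2 C F) = F"
  using strict unfolding strict_2cat_def by metis+

lemma s2_vc [simp]: "t2 C a = s2 C b \<Longrightarrow> s2 C (vc C b a) = s2 C a"
  and t2_vc [simp]: "t2 C a = s2 C b \<Longrightarrow> t2 C (vc C b a) = t2 C b"
  using strict unfolding strict_2cat_def by metis+

lemma vc_id2_right [simp]: "s2 C a = F \<Longrightarrow> vc C a (id2 C F) = a"
  and vc_id2_left [simp]: "t2 C a = F \<Longrightarrow> vc C (id2 C F) a = a"
  using strict unfolding strict_2cat_def by metis+

lemma vc_assoc:
  "t2 C a = s2 C b \<Longrightarrow> t2 C b = s2 C c \<Longrightarrow> vc C c (vc C b a) = vc C (vc C c b) a"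
  using strict unfolding strict_2cat_def by metis

lemma s2_hc [simp]: "cod1 C (s2 C a) = dom1 C (s2 C b) \<Longrightarrow> s2 C (hc C b a) = c1 C (s2 C b) (s2 C a)"
  and t2_hc [simp]: "cod1 C (s2 C a) = dom1 C (s2 C b) \<Longrightarrow> t2 C (hc C b a) = c1 C (t2 C b) (t2 C a)"
  using strict unfolding strict_2cat_def by metis+

lemma hc_id2 [simp]: "cod1 C F = dom1 C G \<Longrightarrow> hc C (id2 C G) (id2 C F) = id2 C (c1 C G F)"
  using strict unfolding strict_2cat_def by metis

lemma hc_assoc:
  "cod1 C (s2 C a) = dom1 C (s2 C b) \<Longrightarrow> cod1 C (s2 C b) = dom1 C (s2 C c) \<Longrightarrow>
   hc C c (hc C b a) = hc C (hc C c b) a"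
  using strict unfolding strict_2cat_def by metis

lemma interchange:
  "t2 C a = s2 C a' \<Longrightarrow> t2 C b = s2 C b' \<Longrightarrow> cod1 C (s2 C a) = dom1 C (s2 C b) \<Longrightarrow>
   hc C (vc C b' b) (vc C a' a) = vc C (hc C b' a') (hc C b a)"
  using strict unfolding strict_2cat_def by metis

lemma s2_wl [simp]: "cod1 C (s2 C a) = dom1 C F \<Longrightarrow> s2 C (wl C F a) = c1 C F (s2 C a)"
  and t2_wl [simp]: "cod1 C (s2 C a) = dom1 C F \<Longrightarrow> t2 C (wl C F a) = c1 C F (t2 C a)"
  unfolding wl_def by simp_all

lemma s2_wr [simp]: "cod1 C F = dom1 C (s2 C a) \<Longrightarrow> s2 C (wr C a F) = c1 C (s2 C a) F"
  and t2_wr [simp]: "cod1 C F = dom1 C (s2 C a) \<Longrightarrow> t2 C (wr C a F) = c1 C (t2 C a) F"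
  unfolding wr_def by simp_all

lemma wl_vc:
  "t2 C a = s2 C b \<Longrightarrow> cod1 C (s2 C a) = dom1 C F \<Longrightarrow>
   wl C F (vc C b a) = vc C (wl C F b) (wl C F a)"
  unfolding wl_def using interchange[of a b "id2 C F" "id2 C F"] by simp

lemma wr_vc:
  "t2 C a = s2 C b \<Longrightarrow> cod1 C F = dom1 C (s2 C a) \<Longrightarrow>
   wr C (vc C b a) F = vc C (wr C b F) (wr C a F)"
  unfolding wr_def using interchange[of "id2 C F" "id2 C F" a b] by simp

lemma wl_wl:
  "cod1 C (s2 C a) = dom1 C G \<Longrightarrow> cod1 C G = dom1 C F \<Longrightarrow>
   wl C F (wl C G a) = wl C (c1 C F G) a"
  unfolding wl_def using hc_assoc[of a "id2 C G" "id2 C F"] by simp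

lemma wr_wr:
  "cod1 C F = dom1 C (s2 C a) \<Longrightarrow> cod1 C G = dom1 C F \<Longrightarrow>
   wr C (wr C a F) G = wr C a (c1 C F G)"
  unfolding wr_def using hc_assoc[of "id2 C G" "id2 C F" a] by simp

lemma wl_wr:
  "cod1 C G = dom1 C (s2 C a) \<Longrightarrow> cod1 C (s2 C a) = dom1 C F \<Longrightarrow>
   wl C F (wr C a G) = wr C (wl C F a) G"
  unfolding wl_def wr_def using hc_assoc[of "id2 C G" a "id2 C F"] by simp

lemma wl_id2: "cod1 C G = dom1 C F \<Longrightarrow> wl C F (id2 C G) = id2 C (c1 C F G)"
  unfolding wl_def by simp

lemma whisker_exchange:
  assumes "cod1 C (s2 C a) = dom1 C (s2 C b)"
  shows "vc C (wr C b (t2 C a)) (wl C (s2 C b) a) = vc C (wl C (t2 C b) a) (wr C b (s2 C a))"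
proof -
  have "hc C b a = vc C (wr C b (t2 C a)) (wl C (s2 C b) a)"
    unfolding wl_def wr_def using assms interchange[of a "id2 C (t2 C a)" "id2 C (s2 C b)" b] by simp
  moreover have "hc C b a = vc C (wl C (t2 C b) a) (wr C b (s2 C a))"
    unfolding wl_def wr_def using assms interchange[of "id2 C (s2 C a)" a b "id2 C (t2 C b)"] by simp
  ultimately show ?thesis by simp
qed

lemma alg_typing:
  assumes "alg C X S m s K M \<mu>"
  shows "dom1 C M = K" "cod1 C M = X" "s2 C \<mu> = c1 C S M" "t2 C \<mu> = M"
  using assms unfolding alg_def hom1_def hom2_def by auto

end

locale rel_distr_law_setting = strict_two_cat C for C :: "('o,'a,'c) twocat" +
  fixes X0 X :: 'o and I T S S0 :: 'a and ext :: "'a \<Rightarrow> 'a \<Rightarrow> 'c \<Rightarrow> 'c"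
    and t m s m0 s0 d :: 'c
  assumes rel_monad: "rel_monad C X0 X I T ext t"
    and compatible: "compatible_monad C X0 X I S m s S0 m0 s0"
    and distr_law: "rel_distr_law C X0 I T ext t S m s S0 m0 s0 d"
begin

lemma typing [simp]:
  "dom1 C I = X0" "cod1 C I = X" "dom1 C T = X0" "cod1 C T = X" "s2 C t = I" "t2 C t = T"
  "dom1 C S = X" "cod1 C S = X" "s2 C m = c1 C S S" "t2 C m = S" "s2 C s = id1 C X" "t2 C s = S"
  "dom1 C S0 = X0" "cod1 C S0 = X0" "s2 C m0 = c1 C S0 S0" "t2 C m0 = S0"
  "s2 C s0 = id1 C X0" "t2 C s0 = S0"
  "s2 C d = c1 C S T" "t2 C d = c1 C T S0"
  using rel_monad compatible distr_law
  unfolding rel_monad_def compatible_monad_def monad2_def rel_distr_law_def hom1_def hom2_def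
  by auto

lemma S_c1_I [simp]: "cod1 C M = X0 \<Longrightarrow> c1 C S (c1 C I M) = c1 C I (c1 C S0 M)"
proof -
  have "c1 C S I = c1 C I S0" using compatible unfolding compatible_monad_def by auto
  then show "cod1 C M = X0 \<Longrightarrow> ?thesis" using c1_assoc[of M I S] c1_assoc[of M S0 I] by simp
qed

lemma D1: "vc C d (wr C m T) = vc C (wl C T m0) (vc C (wr C d S0) (wl C S d))"
  and D2: "vc C d (wr C s T) = wl C T s0"
  and D3: "span0 C X0 A B \<Longrightarrow> hom2 C f (c1 C I A) (c1 C T B) \<Longrightarrow>
       vc C (wr C d B) (wl C S (ext A B f)) =
       vc C (ext (c1 C S0 A) (c1 C S0 B) (vc C (wr C d B) (wl C S f))) (wr C d A)"
  and D4: "vc C d (wl C S t) = wr C t S0"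
  using distr_law unfolding rel_distr_law_def by auto

lemma ext_hom2:
  "span0 C X0 A B \<Longrightarrow> hom2 C k (c1 C I A) (c1 C T B) \<Longrightarrow>
   hom2 C (ext A B k) (c1 C T A) (c1 C T B)"
  using rel_monad unfolding rel_monad_def by (elim conjE) (rule allE, assumption, blast)

lemma ext_natural_left:
  "span0 C X0 A B \<Longrightarrow> span0 C X0 A' B \<Longrightarrow> hom2 C k (c1 C I A) (c1 C T B) \<Longrightarrow> hom2 C a A' A \<Longrightarrow>
   ext A' B (vc C k (wl C I a)) = vc C (ext A B k) (wl C T a)"
  using rel_monad unfolding rel_monad_def by (elim conjE) (rule allE, assumption, blast)

lemma ext_natural_right:
  "span0 C X0 A B \<Longrightarrow> span0 C X0 A B' \<Longrightarrow> hom2 C k (c1 C I A) (c1 C T B) \<Longrightarrow> hom2 C b B B' \<Longrightarrow>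
   ext A B' (vc C (wl C T b) k) = vc C (wl C T b) (ext A B k)"
  using rel_monad unfolding rel_monad_def by (elim conjE) (rule allE, assumption, blast)+

definition lifted_structure :: "'a \<Rightarrow> 'c \<Rightarrow> 'c" where
  "lifted_structure M \<mu> = vc C (wl C T \<mu>) (wr C d M)"

lemma lifted_structure_unit:
  assumes "alg C X0 S0 m0 s0 K M \<mu>"
  shows "vc C (lifted_structure M \<mu>) (wr C s (c1 C T M)) = id2 C (c1 C T M)"
proof -
  note M = alg_typing[OF assms]
  have unit: "vc C \<mu> (wr C s0 M) = id2 C M" using assms unfolding alg_def by simp
  have "vc C (wr C d M) (wr C s (c1 C T M)) = wr C (vc C d (wr C s T)) M"
    using M by (simp add: wr_wr wr_vc)
  also have "\<dots> = wl C T (wr C s0 M)"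
    using M by (simp add: D2 wl_wr)
  finally have "vc C (wr C d M) (wr C s (c1 C T M)) = wl C T (wr C s0 M)" .
  then show ?thesis
    unfolding lifted_structure_def using M
    by (simp add: vc_assoc[symmetric] wl_vc[symmetric] unit wl_id2)
qed

lemma lifted_structure_assoc:
  assumes "alg C X0 S0 m0 s0 K M \<mu>"
  shows "vc C (lifted_structure M \<mu>) (wl C S (lifted_structure M \<mu>))
       = vc C (lifted_structure M \<mu>) (wr C m (c1 C T M))"
proof -
  note M = alg_typing[OF assms]
  have assoc: "vc C \<mu> (wl C S0 \<mu>) = vc C \<mu> (wr C m0 M)" using assms unfolding alg_def by simp
  define dd where "dd = vc C (wr C d (c1 C S0 M)) (wl C S (wr C d M))"
  have dd_typing: "s2 C dd = c1 C S (c1 C S (c1 C T M))" "t2 C dd = c1 C T (c1 C S0 (c1 C S0 M))"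
    unfolding dd_def using M by (simp_all add: wl_wr)
  have d_mu: "vc C (wr C d M) (wl C (c1 C S T) \<mu>) = vc C (wl C T (wl C S0 \<mu>)) (wr C d (c1 C S0 M))"
    using M whisker_exchange[of \<mu> d] by (simp add: wl_wl)
  have "vc C (lifted_structure M \<mu>) (wl C S (lifted_structure M \<mu>))
      = vc C (wl C T \<mu>) (vc C (vc C (wr C d M) (wl C (c1 C S T) \<mu>)) (wl C S (wr C d M)))"
    unfolding lifted_structure_def using M by (simp add: wl_vc wl_wl vc_assoc)
  also have "\<dots> = vc C (wl C T (vc C \<mu> (wl C S0 \<mu>))) dd"
    unfolding d_mu dd_def using M by (simp add: vc_assoc wl_vc)
  also have "\<dots> = vc C (wl C T (vc C \<mu> (wr C m0 M))) dd"
    by (simp only: assoc)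
  also have "\<dots> = vc C (wl C T \<mu>) (wr C (vc C d (wr C m T)) M)"
    unfolding D1 dd_def using M by (simp add: wr_vc wl_wr wr_wr wl_vc vc_assoc)
  also have "\<dots> = vc C (lifted_structure M \<mu>) (wr C m (c1 C T M))"
    unfolding lifted_structure_def using M by (simp add: wr_vc wr_wr vc_assoc)
  finally show ?thesis .
qed

lemma alg_lifted_structure:
  assumes "alg C X0 S0 m0 s0 K M \<mu>"
  shows "alg C X S m s K (c1 C T M) (lifted_structure M \<mu>)"
  using alg_typing[OF assms] lifted_structure_unit[OF assms] lifted_structure_assoc[OF assms]
  unfolding alg_def hom1_def hom2_def lifted_structure_def by simp

lemma alg_mor_lifted_structure:
  assumes M: "alg C X0 S0 m0 s0 K M \<mu>" and N: "alg C X0 S0 m0 s0 K N \<nu>"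
    and f: "alg_mor C S0 M \<mu> N \<nu> f"
  shows "alg_mor C S (c1 C T M) (lifted_structure M \<mu>) (c1 C T N) (lifted_structure N \<nu>) (wl C T f)"
proof -
  note M = alg_typing[OF M] and N = alg_typing[OF N]
  have f_typing: "s2 C f = M" "t2 C f = N" and f_mor: "vc C f \<mu> = vc C \<nu> (wl C S0 f)"
    using f unfolding alg_mor_def hom2_def by auto
  have d_f: "vc C (wr C d N) (wl C S (wl C T f)) = vc C (wl C T (wl C S0 f)) (wr C d M)"
    using M f_typing whisker_exchange[of f d] by (simp add: wl_wl)
  have "vc C (wl C T f) (lifted_structure M \<mu>) = vc C (wl C T (vc C f \<mu>)) (wr C d M)"
    unfolding lifted_structure_def using M f_typing by (simp add: vc_assoc wl_vc)
  also have "\<dots> = vc C (wl C T \<nu>) (vc C (wl C T (wl C S0 f)) (wr C d M))"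
    unfolding f_mor using M N f_typing by (simp add: vc_assoc wl_vc)
  also have "\<dots> = vc C (lifted_structure N \<nu>) (wl C S (wl C T f))"
    unfolding lifted_structure_def d_f[symmetric] using M N f_typing by (simp add: vc_assoc)
  finally show ?thesis
    unfolding alg_mor_def hom2_def using M f_typing by simp
qed

lemma unit_lifts:
  assumes "alg C X0 S0 m0 s0 K M \<mu>"
  shows "vc C (wr C t M) (wl C I \<mu>) = vc C (lifted_structure M \<mu>) (wl C S (wr C t M))"
proof -
  note M = alg_typing[OF assms]
  have "vc C (wr C d M) (wl C S (wr C t M)) = wr C t (c1 C S0 M)"
    using M by (simp add: wl_wr wr_vc[symmetric] D4 wr_wr)
  moreover have "vc C (wr C t M) (wl C I \<mu>) = vc C (wl C T \<mu>) (wr C t (c1 C S0 M))"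
    using M whisker_exchange[of \<mu> t] by simp
  ultimately show ?thesis
    unfolding lifted_structure_def using M by (simp add: vc_assoc[symmetric])
qed

lemma ext_lifts:
  assumes M: "alg C X0 S0 m0 s0 K M \<mu>" and N: "alg C X0 S0 m0 s0 K N \<nu>"
    and f: "hom2 C f (c1 C I M) (c1 C T N)"
    and f_mor: "vc C f (wl C I \<mu>) = vc C (lifted_structure N \<nu>) (wl C S f)"
  shows "vc C (ext M N f) (lifted_structure M \<mu>) = vc C (lifted_structure N \<nu>) (wl C S (ext M N f))"
proof -
  note M = alg_typing[OF M] and N = alg_typing[OF N]
  have spans: "span0 C X0 M N" "span0 C X0 (c1 C S0 M) N" "span0 C X0 (c1 C S0 M) (c1 C S0 N)"
    using M N unfolding span0_def by auto
  have f_typing: "s2 C f = c1 C I M" "t2 C f = c1 C T N"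
    using f unfolding hom2_def by auto
  have ext_f: "s2 C (ext M N f) = c1 C T M" "t2 C (ext M N f) = c1 C T N"
    using ext_hom2[OF spans(1) f] unfolding hom2_def by auto
  define k where "k = vc C (wr C d N) (wl C S f)"
  have k: "hom2 C k (c1 C I (c1 C S0 M)) (c1 C T (c1 C S0 N))"
    unfolding k_def hom2_def using M N f_typing by simp
  have ext_k: "s2 C (ext (c1 C S0 M) (c1 C S0 N) k) = c1 C T (c1 C S0 M)"
    "t2 C (ext (c1 C S0 M) (c1 C S0 N) k) = c1 C T (c1 C S0 N)"
    using ext_hom2[OF spans(3) k] unfolding hom2_def by auto
  have "vc C f (wl C I \<mu>) = vc C (wl C T \<nu>) k"
    using f_mor M N f_typing unfolding lifted_structure_def k_def by (simp add: vc_assoc)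
  then have "vc C (ext M N f) (wl C T \<mu>) = vc C (wl C T \<nu>) (ext (c1 C S0 M) (c1 C S0 N) k)"
    using ext_natural_left[OF spans(1,2) f, of \<mu>] ext_natural_right[OF spans(3,2) k, of \<nu>] M N
    unfolding hom2_def by simp
  then have "vc C (ext M N f) (lifted_structure M \<mu>)
      = vc C (wl C T \<nu>) (vc C (ext (c1 C S0 M) (c1 C S0 N) k) (wr C d M))"
    unfolding lifted_structure_def using M N ext_f ext_k by (simp add: vc_assoc)
  also have "\<dots> = vc C (lifted_structure N \<nu>) (wl C S (ext M N f))"
    unfolding lifted_structure_def D3[OF spans(1) f, folded k_def, symmetric]
    using M N ext_f by (simp add: vc_assoc)
  finally show ?thesis .
qed

lemma lifting_lifted_structure: "lifting C X0 X I T ext t S m s S0 m0 s0 lifted_structure"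
  unfolding lifting_def
proof (intro conjI allI impI; (elim conjE)?)
  fix K M \<mu> assume "alg C X0 S0 m0 s0 K M \<mu>"
  note M = this alg_typing[OF this]
  show "alg C X S m s K (c1 C T M) (lifted_structure M \<mu>)" using alg_lifted_structure[OF M(1)] .
  show "wl C T (id2 C M) = id2 C (c1 C T M)" using M by (simp add: wl_id2)
  show "vc C (wr C t M) (wl C I \<mu>) = vc C (lifted_structure M \<mu>) (wl C S (wr C t M))"
    using unit_lifts[OF M(1)] .
  fix K' H assume "hom1 C H K' K"
  then have H: "dom1 C H = K'" "cod1 C H = K" unfolding hom1_def by auto
  show "c1 C T (c1 C M H) = c1 C (c1 C T M) H" using M H by simp
  show "lifted_structure (c1 C M H) (wr C \<mu> H) = wr C (lifted_structure M \<mu>) H"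
    unfolding lifted_structure_def using M H by (simp add: wr_vc wl_wr wr_wr)
next
  fix K M \<mu> N \<nu> f
  assume "alg C X0 S0 m0 s0 K M \<mu>" "alg C X0 S0 m0 s0 K N \<nu>" "alg_mor C S0 M \<mu> N \<nu> f"
  then show "alg_mor C S (c1 C T M) (lifted_structure M \<mu>) (c1 C T N) (lifted_structure N \<nu>) (wl C T f)"
    by (rule alg_mor_lifted_structure)
next
  fix K M \<mu> N \<nu> P \<rho> f g
  assume "alg C X0 S0 m0 s0 K M \<mu>" "alg_mor C S0 M \<mu> N \<nu> f" "alg_mor C S0 N \<nu> P \<rho> g"
  then show "wl C T (vc C g f) = vc C (wl C T g) (wl C T f)"
    using alg_typing unfolding alg_mor_def hom2_def by (simp add: wl_vc)
next
  fix K K' M \<mu> N \<nu> f H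
  assume "alg C X0 S0 m0 s0 K M \<mu>" "alg_mor C S0 M \<mu> N \<nu> f" "hom1 C H K' K"
  then show "wl C T (wr C f H) = wr C (wl C T f) H"
    using alg_typing unfolding alg_mor_def hom1_def hom2_def by (simp add: wl_wr)
next
  fix K K' M \<mu> H H' \<sigma>
  assume "alg C X0 S0 m0 s0 K M \<mu>" "hom1 C H K' K" "hom2 C \<sigma> H H'"
  then show "wl C T (wl C M \<sigma>) = wl C (c1 C T M) \<sigma>"
    using alg_typing unfolding hom1_def hom2_def by (simp add: wl_wl)
next
  fix K M \<mu> N \<nu> f
  assume "alg C X0 S0 m0 s0 K M \<mu>" "alg C X0 S0 m0 s0 K N \<nu>" "hom2 C f (c1 C I M) (c1 C T N)"
    "vc C f (wl C I \<mu>) = vc C (lifted_structure N \<nu>) (wl C S f)"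
  then show "vc C (ext M N f) (lifted_structure M \<mu>) = vc C (lifted_structure N \<nu>) (wl C S (ext M N f))"
    by (rule ext_lifts)
qed

end

theorem mainTheorem10:
  fixes C :: "('o,'a,'c) twocat"
    and X0 X :: 'o and I T S S0 :: 'a and ext :: "'a \<Rightarrow> 'a \<Rightarrow> 'c \<Rightarrow> 'c"
    and t m s m0 s0 d :: 'c
  assumes "strict_2cat C"
    and "rel_monad C X0 X I T ext t"
    and "compatible_monad C X0 X I S m s S0 m0 s0"
    and "rel_distr_law C X0 I T ext t S m s S0 m0 s0 d"
  shows "lifting C X0 X I T ext t S m s S0 m0 s0
           (\<lambda>M \<mu>. vc C (wl C T \<mu>) (wr C d M))"
proof -
  interpret rel_distr_law_setting C X0 X I T S S0 ext t m s m0 s0 d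
    using assms unfolding rel_distr_law_setting_def rel_distr_law_setting_axioms_def strict_two_cat_def
    by blast
  show ?thesis using lifting_lifted_structure unfolding lifted_structure_def[abs_def] .
qed

end
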